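(* Let $1\le m<n$, let $\mathbf{b}\in\{0,1\}^{n-m}$ with $\mathbf{b}\neq\mathbf{0}_{n-m}$, and let $y\in\mathbb{Q}[t]$. The map \[\mathrm{Tot}(\mathcal{L}^{\mathbb{Q}}_{T^m}(\mathbb{Q}[t];\mathbb{Q}))\to\mathrm{Tot}(\mathcal{L}^{\mathbb{Q}}_{T^n}(\mathbb{Q}[t];\mathbb{Q})),\qquad c\mapsto c_{(-,\mathbf{0})}\otimes y_{(\mathbf{0},\mathbf{b})}\] is a chain map.
   Context: The $n$-chain complex $C^{(n)}=\mathcal{L}^{\mathbb{Q}}_{T^n}(\mathbb{Q}[t];\mathbb{Q})$: in multi-degree $\mathbf{V}=(v_1,\dots,v_n)\in\mathbb{N}^n$, elements are sums of multi-matrices of size $(v_1+1)\times\cdots\times(v_n+1)$ with entries in $\mathbb{Q}[t]$ at coordinates $\mathbf{v}\ne\mathbf{0}_n$ ($\mathbf{0}\le\mathbf{v}\le\mathbf{V}$) and an entry in $\mathbb{Q}$ at $\mathbf{0}_n$ (tensor products over $\mathbb{Q}$; $\mathbb{Q}$ is a $\mathbb{Q}[t]$-module via $t\mapsto0$). In direction $i$ the slices are indexed by $j\in\{0,\dots,v_i\}$; $d_{i,j}$ ($j<v_i$) multiplies slices $j$ and $j+1$ entrywise into one slice and $d_{i,v_i}$ multiplies slice $v_i$ into slice $0$. With $\mathrm{d}_i=\sum_j(-1)^jd_{i,j}$, the total complex has differential $\mathrm{d}=\sum_i(-1)^{v_1+\cdots+v_{i-1}}\mathrm{d}_i$. $\mathbf{0}_k,\mathbf{1}_k$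 are constant vectors of length $k$. For a multi-matrix $c$ in multi-degree $\mathbf{W}\in\mathbb{N}^m$ with entries $c_{\mathbf{a}}$, $c_{(-,\mathbf{0})}\otimes y_{(\mathbf{0},\mathbf{b})}$ is the multi-matrix in multi-degree $(\mathbf{W},\mathbf{1}_{n-m})$ with $c_{\mathbf{a}}$ at coordinate $(\mathbf{a},\mathbf{0}_{n-m})$, $y$ at coordinate $(\mathbf{0}_m,\mathbf{b})$, and $1$ elsewhere; the map is extended linearly. *)

theory Defs
  imports "HOL-Computational_Algebra.Polynomial"
begin

text \<open>A tensor product over Q of copies of Q[t]
(one per nonzero coordinate) and Q (at the zero coordinate) has as Q-basis the monomials,
i.e. exponent assignments e : coordinates -> nat with e(0) = 0.  A basis element of the
total complex is a pair (V, e) of a multi-degree V (a list of length n) and such a monomial.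
A chain is a finitely supported Q-valued function on basis elements.\<close>

type_synonym mono = "nat list \<Rightarrow> nat"
type_synonym basis = "nat list \<times> mono"
type_synonym chain = "basis \<Rightarrow> rat"

definition coords :: "nat list \<Rightarrow> nat list set" where
  "coords V = {v. length v = length V \<and> (\<forall>i<length V. v ! i \<le> V ! i)}"

definition valid_basis :: "nat \<Rightarrow> basis \<Rightarrow> bool" where
  "valid_basis n b \<longleftrightarrow> length (fst b) = n \<and>
     (\<forall>v. snd b v \<noteq> 0 \<longrightarrow> v \<in> coords (fst b) \<and> v \<noteq> replicate n 0)"

text \<open>Slice reindexing of the face map d_{i,j} in a direction of degree vi:
for j < vi slices j and j+1 merge into slice j; for j = vi slice vi goes into slice 0.\<close>
definition slice_map :: "nat \<Rightarrow> nat \<Rightarrow> nat \<Rightarrow> nat" where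
  "slice_map vi j k = (if j < vi then (if k \<le> j then k else k - 1) else (if k = vi then 0 else k))"

definition face_coord :: "nat \<Rightarrow> nat \<Rightarrow> nat list \<Rightarrow> nat list \<Rightarrow> nat list" where
  "face_coord i j V v = v[i := slice_map (V ! i) j (v ! i)]"

definition face_deg :: "nat \<Rightarrow> nat list \<Rightarrow> nat list" where
  "face_deg i V = V[i := V ! i - 1]"

text \<open>Entrywise multiplication: exponents of entries landing on the same coordinate add.\<close>
definition face_mono :: "nat \<Rightarrow> nat \<Rightarrow> nat list \<Rightarrow> mono \<Rightarrow> mono" where
  "face_mono i j V e = (\<lambda>w. \<Sum>v\<in>{v \<in> coords V. face_coord i j V v = w}. e v)"

text \<open>The face map on a basis element; a positive power of t landing at the zero
coordinate (where the entry lies in Q, t acting by 0) kills the term.\<close>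
definition face :: "nat \<Rightarrow> nat \<Rightarrow> basis \<Rightarrow> chain" where
  "face i j b = (let V = fst b; e' = face_mono i j V (snd b) in
     if e' (replicate (length V) 0) = 0
     then (\<lambda>b'. if b' = (face_deg i V, e') then 1 else 0)
     else (\<lambda>_. 0))"

definition basis_diff :: "basis \<Rightarrow> chain" where
  "basis_diff b = (\<lambda>b'. \<Sum>i<length (fst b).
      if fst b ! i = 0 then 0
      else (-1) ^ sum_list (take i (fst b)) *
           (\<Sum>j\<le>fst b ! i. (-1) ^ j * face i j b b'))"

definition linext :: "(basis \<Rightarrow> chain) \<Rightarrow> chain \<Rightarrow> chain" where
  "linext f c = (\<lambda>b'. \<Sum>b\<in>{b. c b \<noteq> 0}. c b * f b b')"

definition chain_diff :: "chain \<Rightarrow> chain" where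
  "chain_diff = linext basis_diff"

text \<open>c_{(-,0)} tensor t^k_{(0,bv)} on a basis element (W,e): entries e at (a,0),
t^k at (0,bv), 1 elsewhere, in multi-degree (W, 1_{n-m}).\<close>
definition tensor_mono :: "nat \<Rightarrow> nat list \<Rightarrow> mono \<Rightarrow> nat \<Rightarrow> mono" where
  "tensor_mono m bv e k = (\<lambda>w.
     if w = replicate m 0 @ bv then k
     else if length w = m + length bv \<and> drop m w = replicate (length bv) 0 then e (take m w)
     else 0)"

definition tensor_basis :: "nat list \<Rightarrow> rat poly \<Rightarrow> basis \<Rightarrow> chain" where
  "tensor_basis bv y b = (\<lambda>b'. \<Sum>k\<le>degree y. coeff y k *
     (if b' = (fst b @ replicate (length bv) 1, tensor_mono (length (fst b)) bv (snd b) k)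
      then 1 else 0))"

definition tensor_map :: "nat list \<Rightarrow> rat poly \<Rightarrow> chain \<Rightarrow> chain" where
  "tensor_map bv y = linext (tensor_basis bv y)"

end

theory Submission
  imports Defs
begin

(* Both sides are linear extensions, so it suffices to compare them on one basis monomial (W, e),
   which is sent to \<Sum>k y_k (W @ 1, e at the slab (-, 0) and t^k at (0, bv)).
   In each trailing direction the degree is 1, so the faces d_{i,0} and d_{i,1} both merge
   slices 0 and 1: they coincide and cancel with opposite signs.  A face in a leading direction
   only touches the first m coordinates, so it maps each slab (-, t) to itself and commutes with
   the tensor construction; since bv is nonzero, t^k never reaches the zero coordinate, hence a
   face term of the tensor is killed exactly when the corresponding face term of e is, and the
   signs agree because the leading degrees are unchanged. *)

lemma linext_eq_sum_superset:
  assumes "finite S" and "{b. c b \<noteq> 0} \<subseteq> S"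
  shows "linext f c x = (\<Sum>b\<in>S. c b * f b x)"
  unfolding linext_def by (rule sum.mono_neutral_left) (use assms in auto)

lemma support_sum_deltas_subset:
  "{b. (\<Sum>k\<in>K. a k * (if b = g k then 1 else 0)) \<noteq> (0::'a::semiring_1)} \<subseteq> g ` K"
proof
  fix b assume "b \<in> {b. (\<Sum>k\<in>K. a k * (if b = g k then 1 else 0)) \<noteq> 0}"
  then obtain k where "k \<in> K" "a k * (if b = g k then 1 else 0) \<noteq> 0"
    by (auto intro: sum.not_neutral_contains_not_neutral)
  then show "b \<in> g ` K" by (auto split: if_splits)
qed

lemma linext_sum_deltas:
  assumes "finite K"
  shows "linext f (\<lambda>b. \<Sum>k\<in>K. a k * (if b = g k then 1 else 0)) x = (\<Sum>k\<in>K. a k * f (g k) x)"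
proof -
  have "linext f (\<lambda>b. \<Sum>k\<in>K. a k * (if b = g k then 1 else 0)) x
      = (\<Sum>s\<in>g ` K. (\<Sum>k\<in>K. a k * (if s = g k then 1 else 0)) * f s x)"
    by (rule linext_eq_sum_superset) (simp_all add: assms support_sum_deltas_subset)
  also have "\<dots> = (\<Sum>k\<in>K. a k * (\<Sum>s\<in>g ` K. (if s = g k then 1 else 0) * f s x))"
    unfolding sum_distrib_right sum_distrib_left mult.assoc by (rule sum.swap)
  also have "\<dots> = (\<Sum>k\<in>K. a k * f (g k) x)"
    using assms by (intro sum.cong refl) (simp add: if_distrib[of "\<lambda>z. z * _"] sum.delta' cong: if_cong)
  finally show ?thesis .
qed

lemma linext_sum_sum_deltas:
  assumes "finite I" and "\<And>i. i \<in> I \<Longrightarrow> finite (J i)"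
  shows "linext f (\<lambda>b. \<Sum>i\<in>I. \<Sum>j\<in>J i. a i j * (if b = g i j then 1 else 0)) x
       = (\<Sum>i\<in>I. \<Sum>j\<in>J i. a i j * f (g i j) x)"
  using linext_sum_deltas[of "Sigma I J" f "\<lambda>p. a (fst p) (snd p)" "\<lambda>p. g (fst p) (snd p)" x] assms
  by (simp add: sum.Sigma split_def)

lemma linext_linext:
  assumes "finite {b. c b \<noteq> 0}" and "\<And>b. c b \<noteq> 0 \<Longrightarrow> finite {x. g b x \<noteq> 0}"
  shows "linext f (linext g c) = linext (\<lambda>b. linext f (g b)) c"
proof
  fix x
  define S where "S = (\<Union>b\<in>{b. c b \<noteq> 0}. {x. g b x \<noteq> 0})"
  have "finite S" unfolding S_def using assms by auto
  have "linext f (linext g c) x = (\<Sum>b'\<in>S. linext g c b' * f b' x)"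
  proof (rule linext_eq_sum_superset[OF \<open>finite S\<close>], rule subsetI)
    fix b' assume "b' \<in> {b'. linext g c b' \<noteq> 0}"
    then have "(\<Sum>b\<in>{b. c b \<noteq> 0}. c b * g b b') \<noteq> 0" unfolding linext_def by simp
    then obtain b where "b \<in> {b. c b \<noteq> 0}" "c b * g b b' \<noteq> 0"
      by (rule sum.not_neutral_contains_not_neutral)
    then show "b' \<in> S" unfolding S_def by (intro UN_I) simp_all
  qed
  also have "\<dots> = (\<Sum>b\<in>{b. c b \<noteq> 0}. c b * (\<Sum>b'\<in>S. g b b' * f b' x))"
    unfolding linext_def sum_distrib_right sum_distrib_left mult.assoc by (rule sum.swap)
  also have "\<dots> = linext (\<lambda>b. linext f (g b)) c x"
    unfolding linext_def[of _ c]
  proof (rule sum.cong[OF refl])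
    fix b assume "b \<in> {b. c b \<noteq> 0}"
    then have "{x. g b x \<noteq> 0} \<subseteq> S" unfolding S_def by (rule UN_upper)
    then show "c b * (\<Sum>b'\<in>S. g b b' * f b' x) = c b * linext f (g b) x"
      using linext_eq_sum_superset[OF \<open>finite S\<close>] by simp
  qed
  finally show "linext f (linext g c) x = linext (\<lambda>b. linext f (g b)) c x" .
qed

lemma finite_coords: "finite (coords V)"
proof (rule finite_subset)
  show "coords V \<subseteq> {v. set v \<subseteq> {..sum_list V} \<and> length v = length V}"
    unfolding coords_def
    by (fastforce simp: in_set_conv_nth intro: order.trans[OF _ elem_le_sum_list])
qed (rule finite_lists_length_eq, simp)

lemma all_less_add_iff:
  fixes m n :: nat
  shows "(\<forall>i<m + n. P i) \<longleftrightarrow> (\<forall>i<m. P i) \<and> (\<forall>i<n. P (m + i))"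
proof
  assume "(\<forall>i<m. P i) \<and> (\<forall>i<n. P (m + i))"
  then show "\<forall>i<m + n. P i"
    by (metis add_diff_inverse_nat nat_add_left_cancel_less)
qed simp

lemma append_mem_coords_iff:
  assumes "length u = length W"
  shows "u @ t \<in> coords (W @ V) \<longleftrightarrow> u \<in> coords W \<and> t \<in> coords V"
  using assms unfolding coords_def by (auto simp: all_less_add_iff nth_append)

lemma face_coord_append:
  assumes "i < length u" and "length u = length W"
  shows "face_coord i j (W @ V) (u @ t) = face_coord i j W u @ t"
  using assms by (simp add: face_coord_def nth_append list_update_append)

lemma length_face_coord: "length (face_coord i j V v) = length v"
  by (simp add: face_coord_def)

lemma slice_map_zero: "slice_map vi j 0 = 0"
  by (simp add: slice_map_def)

lemma face_coord_replicate_zero: "face_coord i j V (replicate n 0) = replicate n 0"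
  by (cases "i < n") (simp_all add: face_coord_def list_update_same_conv list_update_beyond slice_map_zero)

definition extend_mono :: "nat \<Rightarrow> nat list \<Rightarrow> mono \<Rightarrow> mono" where
  "extend_mono m t e = (\<lambda>v. if length v = m + length t \<and> drop m v = t then e (take m v) else 0)"

lemma tensor_mono_eq_extend_mono:
  assumes "bv \<noteq> replicate (length bv) 0"
  shows "tensor_mono m bv e k = (\<lambda>v. extend_mono m bv (\<lambda>u. if u = replicate m 0 then k else 0) v
                                    + extend_mono m (replicate (length bv) 0) e v)"
proof
  fix v
  have "v = replicate m 0 @ bv \<longleftrightarrow> length v = m + length bv \<and> drop m v = bv \<and> take m v = replicate m 0"
    by (metis append_eq_conv_conj append_take_drop_id length_append length_replicate)
  then show "tensor_mono m bv e k v = extend_mono m bv (\<lambda>u. if u = replicate m 0 then k else 0) v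
                                    + extend_mono m (replicate (length bv) 0) e v"
    using assms unfolding tensor_mono_def extend_mono_def by auto
qed

lemma tensor_mono_at_zero:
  assumes "bv \<noteq> replicate (length bv) 0"
  shows "tensor_mono m bv e k (replicate (m + length bv) 0) = e (replicate m 0)"
  using assms by (simp add: tensor_mono_def replicate_add)

lemma face_mono_add:
  "face_mono i j V (\<lambda>v. e1 v + e2 v) = (\<lambda>w. face_mono i j V e1 w + face_mono i j V e2 w)"
  unfolding face_mono_def by (simp add: sum.distrib)

lemma face_mono_zero_indicator:
  "face_mono i j V (\<lambda>v. if v = replicate (length V) 0 then k else 0)
     = (\<lambda>w. if w = replicate (length V) 0 then k else 0)"
proof
  fix w
  have "replicate (length V) 0 \<in> coords V" by (simp add: coords_def)
  then show "face_mono i j V (\<lambda>v. if v = replicate (length V) 0 then k else 0) w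
           = (if w = replicate (length V) 0 then k else 0)"
    unfolding face_mono_def
    by (simp add: sum.delta' finite_coords face_coord_replicate_zero eq_commute[of w])
qed

lemma face_coord_slab:
  assumes i: "i < length W" and t: "t \<in> coords V"
  shows "{v \<in> coords (W @ V). face_coord i j (W @ V) v = w \<and> length v = length W + length t \<and> drop (length W) v = t}
       = (\<lambda>u. u @ t) ` {u \<in> coords W. face_coord i j W u @ t = w}"
proof (intro set_eqI iffI)
  fix v assume "v \<in> {v \<in> coords (W @ V). face_coord i j (W @ V) v = w \<and> length v = length W + length t \<and> drop (length W) v = t}"
  then have v: "v \<in> coords (W @ V)" "face_coord i j (W @ V) v = w" "length v = length W + length t" "drop (length W) v = t"
    by simp_all
  define u where "u = take (length W) v"
  have "v = u @ t" and "length u = length W"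
    unfolding u_def using v by (metis append_take_drop_id, simp)
  with v i show "v \<in> (\<lambda>u. u @ t) ` {u \<in> coords W. face_coord i j W u @ t = w}"
    by (simp add: append_mem_coords_iff face_coord_append)
next
  fix v assume "v \<in> (\<lambda>u. u @ t) ` {u \<in> coords W. face_coord i j W u @ t = w}"
  then obtain u where "u \<in> coords W" "face_coord i j W u @ t = w" "v = u @ t"
    by blast
  moreover from \<open>u \<in> coords W\<close> have "length u = length W" by (simp add: coords_def)
  ultimately show "v \<in> {v \<in> coords (W @ V). face_coord i j (W @ V) v = w \<and> length v = length W + length t \<and> drop (length W) v = t}"
    using i t by (simp add: append_mem_coords_iff face_coord_append)
qed

lemma face_mono_extend_mono:
  assumes i: "i < length W" and t: "t \<in> coords V"
  shows "face_mono i j (W @ V) (extend_mono (length W) t e)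
       = extend_mono (length W) t (face_mono i j W e)"
proof
  fix w
  define m where "m = length W"
  define U where "U = {u \<in> coords W. face_coord i j W u @ t = w}"
  have lengths: "length u = m" if "u \<in> coords W" for u
    using that by (simp add: coords_def m_def)
  have "face_mono i j (W @ V) (extend_mono m t e) w
      = (\<Sum>v\<in>{v \<in> coords (W @ V). face_coord i j (W @ V) v = w \<and> length v = m + length t \<and> drop m v = t}.
           e (take m v))"
    unfolding face_mono_def extend_mono_def by (simp add: sum.inter_filter[symmetric] finite_coords conj_assoc)
  also have "\<dots> = (\<Sum>u\<in>U. e u)"
    unfolding m_def face_coord_slab[OF i t] U_def
    by (rule sum.reindex_cong[where l = "\<lambda>u. u @ t"]) (auto simp: inj_on_def coords_def)
  also have "\<dots> = extend_mono m t (face_mono i j W e) w"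
  proof (cases "length w = m + length t \<and> drop m w = t")
    case True
    then have "U = {u \<in> coords W. face_coord i j W u = take m w}"
      unfolding U_def using lengths
      by (metis (lifting) append_eq_conv_conj append_take_drop_id length_face_coord)
    then show ?thesis using True by (simp add: extend_mono_def face_mono_def)
  next
    case False
    then have "U = {}" unfolding U_def using lengths by (auto simp: length_face_coord)
    then show ?thesis using False by (auto simp: extend_mono_def)
  qed
  finally show "face_mono i j (W @ V) (extend_mono (length W) t e) w
       = extend_mono (length W) t (face_mono i j W e) w" by (simp add: m_def)
qed

lemma face_mono_tensor_mono:
  assumes i: "i < length W" and bv: "set bv \<subseteq> {0, 1}" "bv \<noteq> replicate (length bv) 0"
  shows "face_mono i j (W @ replicate (length bv) 1) (tensor_mono (length W) bv e k)
       = tensor_mono (length W) bv (face_mono i j W e) k"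
proof -
  have "bv \<in> coords (replicate (length bv) 1)"
    using bv(1) unfolding coords_def by (auto dest!: nth_mem)
  moreover have "replicate (length bv) 0 \<in> coords (replicate (length bv) 1)"
    by (simp add: coords_def)
  ultimately show ?thesis
    using i bv(2)
    by (simp add: tensor_mono_eq_extend_mono face_mono_add face_mono_extend_mono
        face_mono_zero_indicator)
qed

definition face_coeff :: "nat list \<Rightarrow> mono \<Rightarrow> nat \<Rightarrow> nat \<Rightarrow> rat" where
  "face_coeff V e i j = (if V ! i = 0 then 0 else (-1) ^ sum_list (take i V) * (-1) ^ j *
     (if face_mono i j V e (replicate (length V) 0) = 0 then 1 else 0))"

lemma basis_diff_eq_sum_faces:
  "basis_diff (V, e) = (\<lambda>x. \<Sum>i<length V. \<Sum>j\<le>V ! i.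
     face_coeff V e i j * (if x = (face_deg i V, face_mono i j V e) then 1 else 0))"
  unfolding basis_diff_def
  by (intro ext sum.cong refl)
     (auto simp: face_coeff_def face_def Let_def sum_distrib_left intro!: sum.cong)

lemma face_mono_degree_one:
  assumes "i < length V" and "V ! i = 1"
  shows "face_mono i 0 V e = face_mono i 1 V e"
proof -
  have "face_coord i 0 V v = face_coord i 1 V v" if "v \<in> coords V" for v
  proof -
    from that assms have "v ! i \<le> 1" by (auto simp: coords_def)
    with assms(2) have "slice_map (V ! i) 0 (v ! i) = slice_map (V ! i) 1 (v ! i)"
      by (auto simp: slice_map_def le_Suc_eq)
    then show ?thesis by (simp add: face_coord_def)
  qed
  then have "{v \<in> coords V. face_coord i 0 V v = w} = {v \<in> coords V. face_coord i 1 V v = w}" for w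
    by auto
  then show ?thesis unfolding face_mono_def by simp
qed

lemma faces_of_degree_one_cancel:
  assumes "i < length V" and "V ! i = 1"
  shows "(\<Sum>j\<le>V ! i. face_coeff V e i j * (if x = (face_deg i V, face_mono i j V e) then 1 else 0)) = 0"
  using assms(2) face_mono_degree_one[OF assms] by (simp add: face_coeff_def)

lemma basis_diff_tensor_mono:
  assumes bv: "set bv \<subseteq> {0, 1}" "bv \<noteq> replicate (length bv) 0"
  defines "ones \<equiv> replicate (length bv) 1"
  shows "basis_diff (W @ ones, tensor_mono (length W) bv e k) x
       = (\<Sum>i<length W. \<Sum>j\<le>W ! i. face_coeff W e i j *
            (if x = (face_deg i W @ ones, tensor_mono (length W) bv (face_mono i j W e) k) then 1 else 0))"
proof -
  define E where "E = tensor_mono (length W) bv e k"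
  define T where "T i = (\<Sum>j\<le>(W @ ones) ! i. face_coeff (W @ ones) E i j *
      (if x = (face_deg i (W @ ones), face_mono i j (W @ ones) E) then 1 else 0))" for i
  have split: "{..<length (W @ ones)} = {..<length W} \<union> {length W..<length W + length bv}"
    by (auto simp: ones_def)
  have "basis_diff (W @ ones, E) x = (\<Sum>i<length W. T i) + (\<Sum>i\<in>{length W..<length W + length bv}. T i)"
    unfolding basis_diff_eq_sum_faces T_def split by (rule sum.union_disjoint) auto
  also have "(\<Sum>i\<in>{length W..<length W + length bv}. T i) = 0"
    unfolding T_def
    by (rule sum.neutral, intro ballI faces_of_degree_one_cancel) (auto simp: ones_def nth_append)
  also have "(\<Sum>i<length W. T i) = (\<Sum>i<length W. \<Sum>j\<le>W ! i. face_coeff W e i j *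
            (if x = (face_deg i W @ ones, tensor_mono (length W) bv (face_mono i j W e) k) then 1 else 0))"
  proof (intro sum.cong refl)
    fix i j assume "i \<in> {..<length W}"
    then have i: "i < length W" by simp
    have faces: "face_mono i j (W @ ones) E = tensor_mono (length W) bv (face_mono i j W e) k" for j
      unfolding E_def ones_def using face_mono_tensor_mono[OF i bv] .
    have "face_mono i j (W @ ones) E (replicate (length (W @ ones)) 0)
        = face_mono i j W e (replicate (length W) 0)" for j
      unfolding faces using tensor_mono_at_zero[OF bv(2)] by (simp add: ones_def)
    then have "face_coeff (W @ ones) E i j = face_coeff W e i j" for j
      using i by (simp add: face_coeff_def nth_append)
    then show "T i = (\<Sum>j\<le>W ! i. face_coeff W e i j *
            (if x = (face_deg i W @ ones, tensor_mono (length W) bv (face_mono i j W e) k) then 1 else 0))"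
      using i unfolding T_def faces by (simp add: nth_append face_deg_def list_update_append)
  qed
  finally show ?thesis by (simp add: E_def)
qed

lemma finite_support_tensor_basis: "finite {x. tensor_basis bv y b x \<noteq> 0}"
  unfolding tensor_basis_def by (rule finite_subset[OF support_sum_deltas_subset]) simp

lemma finite_support_basis_diff: "finite {x. basis_diff b x \<noteq> 0}"
proof -
  obtain V e where b: "b = (V, e)" by fastforce
  define I where "I = Sigma {..<length V} (\<lambda>i. {..V ! i})"
  have "basis_diff b = (\<lambda>x. \<Sum>p\<in>I. face_coeff V e (fst p) (snd p) *
      (if x = (face_deg (fst p) V, face_mono (fst p) (snd p) V e) then 1 else 0))"
    unfolding b basis_diff_eq_sum_faces I_def by (simp add: sum.Sigma split_def)
  then show ?thesis
    by (simp only:) (rule finite_subset[OF support_sum_deltas_subset], simp add: I_def)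
qed

lemma sum_mult_sum_sum_swap:
  "(\<Sum>k\<in>K. a k * (\<Sum>i\<in>I. \<Sum>j\<in>J i. c i j * d i j k))
     = (\<Sum>i\<in>I. \<Sum>j\<in>J i. c i j * (\<Sum>k\<in>K. a k * d i j k :: 'a::comm_semiring_1))"
  unfolding sum_distrib_left
  by (subst sum.swap, rule sum.cong[OF refl], subst sum.swap) (simp add: mult.left_commute)

lemma linext_basis_diff_tensor_basis:
  assumes "set bv \<subseteq> {0, 1}" and "bv \<noteq> replicate (length bv) 0"
  shows "linext basis_diff (tensor_basis bv y b) = linext (tensor_basis bv y) (basis_diff b)"
proof
  fix x
  obtain W e where b: "b = (W, e)" by fastforce
  define ones where "ones = replicate (length bv) (1::nat)"
  have "linext basis_diff (tensor_basis bv y b) x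
      = (\<Sum>k\<le>degree y. coeff y k * basis_diff (W @ ones, tensor_mono (length W) bv e k) x)"
    unfolding b tensor_basis_def fst_conv snd_conv ones_def by (rule linext_sum_deltas) simp
  also have "\<dots> = (\<Sum>i<length W. \<Sum>j\<le>W ! i. face_coeff W e i j * (\<Sum>k\<le>degree y. coeff y k *
        (if x = (face_deg i W @ ones, tensor_mono (length W) bv (face_mono i j W e) k) then 1 else 0)))"
    unfolding ones_def basis_diff_tensor_mono[OF assms] by (rule sum_mult_sum_sum_swap)
  also have "\<dots> = (\<Sum>i<length W. \<Sum>j\<le>W ! i. face_coeff W e i j *
        tensor_basis bv y (face_deg i W, face_mono i j W e) x)"
    by (simp add: tensor_basis_def ones_def face_deg_def)
  also have "\<dots> = linext (tensor_basis bv y) (basis_diff b) x"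
    unfolding b basis_diff_eq_sum_faces by (rule linext_sum_sum_deltas[symmetric]) auto
  finally show "linext basis_diff (tensor_basis bv y b) x = linext (tensor_basis bv y) (basis_diff b) x" .
qed

theorem lemma4p7:
  fixes m n :: nat and bv :: "nat list" and y :: "rat poly" and c :: chain
  assumes "1 \<le> m" and "m < n"
    and "length bv = n - m" and "set bv \<subseteq> {0, 1}" and "bv \<noteq> replicate (n - m) 0"
    and "finite {b. c b \<noteq> 0}"
    and "\<forall>b. c b \<noteq> 0 \<longrightarrow> valid_basis m b"
  shows "chain_diff (tensor_map bv y c) = tensor_map bv y (chain_diff c)"
proof -
  have bv: "set bv \<subseteq> {0, 1}" "bv \<noteq> replicate (length bv) 0"
    using assms(3-5) by simp_all
  have "chain_diff (tensor_map bv y c) = linext (\<lambda>b. linext basis_diff (tensor_basis bv y b)) c"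
    unfolding chain_diff_def tensor_map_def
    by (rule linext_linext[OF assms(6) finite_support_tensor_basis])
  also have "\<dots> = linext (\<lambda>b. linext (tensor_basis bv y) (basis_diff b)) c"
    by (simp only: linext_basis_diff_tensor_basis[OF bv])
  also have "\<dots> = tensor_map bv y (chain_diff c)"
    unfolding chain_diff_def tensor_map_def
    by (rule linext_linext[OF assms(6) finite_support_basis_diff, symmetric])
  finally show ?thesis .
qed

end
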